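(* As $\tau\to\infty$, $$J(\tau;f,g)=O\Big(\tau e^{-\tau\min_{x\in\partial D,\,y\in\partial B,\,y'\in\partial B'}\phi(x;y,y')}\Big).$$
   Context: Let $D\subset\mathbb R^3$ be a nonempty bounded open set with $C^2$ boundary. $B,B'$ are open balls with $\overline B\cap\overline D=\overline{B'}\cap\overline D=\emptyset$, $f=\chi_B$, $g=\chi_{B'}$. For $h\in L^2(\mathbb R^3)$ and $\tau>0$, $v_h(x)=\frac1{4\pi}\int\frac{e^{-\tau|x-y|}}{|x-y|}h(y)dy$. $J(\tau;f,g)=\int_D(\nabla v_f\cdot\nabla v_g+\tau^2v_fv_g)dx$. $\phi(x;y,y')=|y-x|+|x-y'|$. *)

theory Defs
  imports "HOL-Analysis.Analysis"
begin

definition partial_deriv :: "('n::finite) \<Rightarrow> (real^'n \<Rightarrow> real) \<Rightarrow> real^'n \<Rightarrow> real" where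
  "partial_deriv i u x = frechet_derivative u (at x) (axis i 1)"

definition grad :: "(real^'n::finite \<Rightarrow> real) \<Rightarrow> real^'n \<Rightarrow> real^'n" where
  "grad u x = (\<chi> i. partial_deriv i u x)"

definition C2_on :: "(real^'n::finite) set \<Rightarrow> (real^'n \<Rightarrow> real) \<Rightarrow> bool" where
  "C2_on U u \<longleftrightarrow> open U \<and> u differentiable_on U \<and>
     (\<forall>i. (partial_deriv i u) differentiable_on U) \<and>
     (\<forall>i j. continuous_on U (partial_deriv j (partial_deriv i u)))"

definition C2_boundary :: "(real^3) set \<Rightarrow> bool" where
  "C2_boundary D \<longleftrightarrow> (\<forall>p \<in> frontier D. \<exists>r>0. \<exists>T :: real^3 \<Rightarrow> real^3. \<exists>a :: real^3. \<exists>h :: real^2 \<Rightarrow> real.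
      orthogonal_transformation T \<and> C2_on UNIV h \<and>
      D \<inter> ball p r =
        {x \<in> ball p r. (T (x - a)) $ 3 < h (vector [(T (x - a)) $ 1, (T (x - a)) $ 2])})"

definition v_pot :: "real \<Rightarrow> (real^3 \<Rightarrow> real) \<Rightarrow> real^3 \<Rightarrow> real" where
  "v_pot \<tau> h x = (1 / (4 * pi)) *
     (\<integral>y. exp (- \<tau> * norm (x - y)) / norm (x - y) * h y \<partial>lborel)"

definition J_fun :: "(real^3) set \<Rightarrow> real \<Rightarrow> (real^3 \<Rightarrow> real) \<Rightarrow> (real^3 \<Rightarrow> real) \<Rightarrow> real" where
  "J_fun D \<tau> f g = (LINT x:D|lborel.
      grad (v_pot \<tau> f) x \<bullet> grad (v_pot \<tau> g) x + \<tau>\<^sup>2 * v_pot \<tau> f x * v_pot \<tau> g x)"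

definition phi :: "real^3 \<Rightarrow> real^3 \<Rightarrow> real^3 \<Rightarrow> real" where
  "phi x y y' = norm (y - x) + norm (x - y')"

end

theory Submission
  imports Defs
begin

text \<open>
  Fix \<delta> > 0 below the distance from D to both balls. For x in D, v_f(x) and grad v_f(x) are
  integrals over B of the Yukawa kernel exp(-\<tau>|z|)/|z| and of its gradient, which for |z| \<ge> \<delta> are
  bounded by (\<tau>/\<delta> + 1/\<delta>^2) exp(-\<tau>|z|). The triangle inequality |x - y| \<ge> (|x - c| - r) + (r - |y - c|)
  splits off the factor exp(-\<tau>(|x - c| - r)), and the remaining integral of exp(-\<tau>(r - |y - c|))
  over B is O(\<tau>^(-1/2)), since only a shell of width \<tau>^(-1/2) contributes more than
  exp(-sqrt \<tau>). So the integrand of J is O(\<tau> exp(-\<tau> d(x))) with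
  d(x) = (|x - c| - r) + (|x - c'| - r'), and d(x) dominates the minimum of \<phi>: the segment
  from x to its nearest point on the sphere of B leaves D, hence crosses the frontier of D.
\<close>

definition yukawa_kernel :: "real \<Rightarrow> 'a::real_normed_vector \<Rightarrow> real" where
  "yukawa_kernel \<tau> z = exp (- \<tau> * norm z) / norm z"

definition yukawa_kernel_grad :: "real \<Rightarrow> 'a::real_normed_vector \<Rightarrow> 'a" where
  "yukawa_kernel_grad \<tau> z = - (exp (- \<tau> * norm z) * (\<tau> * norm z + 1) / norm z ^ 3) *\<^sub>R z"

lemma borel_measurable_yukawa_kernel [measurable]:
  "yukawa_kernel \<tau> \<in> borel_measurable borel"
  unfolding yukawa_kernel_def by measurable

lemma borel_measurable_yukawa_kernel_grad [measurable]:
  "(yukawa_kernel_grad \<tau> :: 'a::euclidean_space \<Rightarrow> 'a) \<in> borel_measurable borel"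
  unfolding yukawa_kernel_grad_def by measurable

lemma continuous_on_yukawa_kernel: "continuous_on (- {0}) (yukawa_kernel \<tau>)"
  unfolding yukawa_kernel_def by (intro continuous_intros) auto

lemma continuous_on_yukawa_kernel_grad: "continuous_on (- {0}) (yukawa_kernel_grad \<tau>)"
  unfolding yukawa_kernel_grad_def by (intro continuous_intros) auto

lemma has_derivative_yukawa_kernel:
  fixes z :: "'a::real_inner"
  assumes "z \<noteq> 0"
  shows "(yukawa_kernel \<tau> has_derivative (\<lambda>h. yukawa_kernel_grad \<tau> z \<bullet> h)) (at z)"
proof -
  have norm: "(norm has_derivative (\<lambda>h. sgn z \<bullet> h)) (at z)"
    using has_derivative_norm[OF assms] by (simp add: inner_commute)
  have "(yukawa_kernel \<tau> has_derivative
     (\<lambda>h. (exp (- \<tau> * norm z) * (- \<tau> * (sgn z \<bullet> h))) / norm z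
        - exp (- \<tau> * norm z) * (sgn z \<bullet> h) / (norm z)^2)) (at z)"
    unfolding yukawa_kernel_def using assms
    by (auto intro!: derivative_eq_intros norm simp: power2_eq_square field_simps)
  moreover have "(exp (- \<tau> * norm z) * (- \<tau> * (sgn z \<bullet> h))) / norm z
        - exp (- \<tau> * norm z) * (sgn z \<bullet> h) / (norm z)^2 = yukawa_kernel_grad \<tau> z \<bullet> h" for h
    using assms unfolding yukawa_kernel_grad_def sgn_div_norm
    by (simp add: field_simps power2_eq_square power3_eq_cube inner_scaleR_left)
  ultimately show ?thesis by simp
qed

lemma norm_yukawa_kernel_grad:
  assumes "\<tau> \<ge> 0"
  shows "norm (yukawa_kernel_grad \<tau> z) = exp (- \<tau> * norm z) * (\<tau> * norm z + 1) / norm z ^ 2"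
proof (cases "z = 0")
  case False
  have "\<tau> * norm z + 1 \<ge> 0" using assms by simp
  then show ?thesis unfolding yukawa_kernel_grad_def using False
    by (simp add: abs_mult power2_eq_square power3_eq_cube abs_divide)
qed (simp add: yukawa_kernel_grad_def)

lemma abs_integral_weighted_le:
  fixes w f :: "'a \<Rightarrow> real"
  assumes S: "S \<in> sets M" "emeasure M S < \<infinity>" and "0 \<le> B"
    and w: "\<And>t. \<bar>w t\<bar> \<le> 1" "\<And>t. t \<notin> S \<Longrightarrow> w t = 0"
    and f: "\<And>t. t \<in> S \<Longrightarrow> \<bar>f t\<bar> \<le> B"
  shows "\<bar>\<integral>t. w t * f t \<partial>M\<bar> \<le> measure M S * B"
proof -
  have "\<bar>\<integral>t. w t * f t \<partial>M\<bar> \<le> (\<integral>t. norm (w t * f t) \<partial>M)"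
    using integral_norm_bound[of M "\<lambda>t. w t * f t"] by simp
  also have "\<dots> \<le> (\<integral>t. indicator S t * B \<partial>M)"
  proof (rule integral_mono')
    show "integrable M (\<lambda>t. indicator S t * B)"
      using S by (intro integrable_mult_left integrable_real_indicator) auto
    show "0 \<le> indicator S t * B" for t using \<open>0 \<le> B\<close> by simp
    show "norm (w t * f t) \<le> indicator S t * B" for t
    proof (cases "t \<in> S")
      case True
      then show ?thesis
        using mult_mono[OF w(1) f[OF True]] by (simp add: abs_mult)
    qed (simp add: w(2))
  qed
  also have "\<dots> = measure M S * B" using sets.sets_into_space[OF S(1)] by (simp add: Int_absorb2)
  finally show ?thesis .
qed

lemma integrable_weighted_continuous:
  fixes g :: "'a::euclidean_space \<Rightarrow> 'b::{banach,second_countable_topology}"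
  assumes S: "compact S" and g: "continuous_on S g" "g \<in> borel_measurable borel"
    and w: "w \<in> borel_measurable borel" "\<And>t. \<bar>w t\<bar> \<le> 1" "\<And>t. t \<notin> S \<Longrightarrow> w t = 0"
  shows "integrable lborel (\<lambda>t. w t *\<^sub>R g t)"
proof (rule Bochner_Integration.integrable_bound[OF borel_integrable_compact[OF S g(1)]])
  show "(\<lambda>t. w t *\<^sub>R g t) \<in> borel_measurable lborel" using g w by measurable
  show "AE t in lborel. norm (w t *\<^sub>R g t) \<le> norm (indicator S t *\<^sub>R g t)"
  proof (intro AE_I2)
    fix t show "norm (w t *\<^sub>R g t) \<le> norm (indicator S t *\<^sub>R g t)"
    proof (cases "t \<in> S")
      case True then show ?thesis using w(2)[of t] by (auto intro: mult_left_le_one_le)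
    qed (simp add: w(3))
  qed
qed

lemma inner_linearization_bound:
  fixes f :: "'a::real_inner \<Rightarrow> real"
  assumes f: "\<And>x. x \<in> ball x0 d \<Longrightarrow> (f has_derivative (\<lambda>h. f' x \<bullet> h)) (at x)"
    and f': "\<And>x. x \<in> ball x0 d \<Longrightarrow> norm (f' x - f' x0) \<le> e"
    and y: "y \<in> ball x0 d"
  shows "\<bar>f y - f x0 - f' x0 \<bullet> (y - x0)\<bar> \<le> e * norm (y - x0)"
proof -
  have "norm (f y - f x0 - f' x0 \<bullet> (y - x0)) \<le> norm (y - x0) * e"
  proof (rule differentiable_bound_linearization[where S = "ball x0 d" and f' = "\<lambda>x h. f' x \<bullet> h"])
    show "x0 + s *\<^sub>R (y - x0) \<in> ball x0 d" if "s \<in> {0..1}" for s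
    proof -
      have "norm (s *\<^sub>R (y - x0)) \<le> norm (y - x0)" using that by (auto intro: mult_left_le_one_le)
      then show ?thesis using y by (simp add: dist_norm norm_minus_commute)
    qed
    show "x0 \<in> ball x0 d" using y by (auto intro: le_less_trans[OF zero_le_dist])
    show "(f has_derivative (\<lambda>h. f' x \<bullet> h)) (at x within ball x0 d)" if "x \<in> ball x0 d" for x
      using f[OF that] by (rule has_derivative_at_withinI)
    show "onorm ((\<lambda>h. f' x \<bullet> h) - (\<lambda>h. f' x0 \<bullet> h)) \<le> e" if "x \<in> ball x0 d" for x
    proof (rule onorm_bound)
      show "0 \<le> e" using f'[OF that] norm_ge_zero order_trans by blast
      show "norm (((\<lambda>h. f' x \<bullet> h) - (\<lambda>h. f' x0 \<bullet> h)) h) \<le> e * norm h" for h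
        using Cauchy_Schwarz_ineq2[of "f' x - f' x0" h] mult_right_mono[OF f'[OF that] norm_ge_zero[of h]]
        by (simp add: inner_diff_left)
    qed
  qed
  then show ?thesis by (simp add: mult.commute)
qed

lemma translates_uniformly_close:
  fixes G :: "'a::euclidean_space \<Rightarrow> 'b::real_normed_vector"
  assumes G: "continuous_on (- {0}) G" and S: "compact S" "x0 \<notin> S" and "e > 0"
  obtains d where "d > 0" "ball x0 d \<inter> S = {}"
    "\<And>x t. x \<in> ball x0 d \<Longrightarrow> t \<in> S \<Longrightarrow> norm (G (x - t) - G (x0 - t)) \<le> e"
proof -
  obtain \<epsilon> where "\<epsilon> > 0" and \<epsilon>: "cball x0 \<epsilon> \<inter> S = {}"
  proof -
    obtain d where "d > 0" "\<forall>x\<in>S. d \<le> dist x0 x"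
      using separate_point_closed[OF compact_imp_closed[OF S(1)] S(2)] by blast
    then show ?thesis by (intro that[of "d / 2"]) fastforce+
  qed
  have "uniformly_continuous_on (cball x0 \<epsilon> \<times> S) (\<lambda>p. G (fst p - snd p))"
    using \<epsilon> S(1)
    by (intro compact_uniformly_continuous compact_Times continuous_on_compose2[OF G])
      (auto intro!: continuous_intros)
  then obtain d where "d > 0" and d: "\<And>p p'. p \<in> cball x0 \<epsilon> \<times> S \<Longrightarrow> p' \<in> cball x0 \<epsilon> \<times> S \<Longrightarrow>
      dist p' p < d \<Longrightarrow> dist (G (fst p' - snd p')) (G (fst p - snd p)) < e"
    using \<open>e > 0\<close> unfolding uniformly_continuous_on_def by metis
  have "norm (G (x - t) - G (x0 - t)) \<le> e" if "x \<in> ball x0 (min d \<epsilon>)" "t \<in> S" for x t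
    using d[of "(x0, t)" "(x, t)"] that \<open>\<epsilon> > 0\<close>
    by (auto simp: dist_Pair_Pair dist_commute dist_norm) (metis norm_minus_commute less_imp_le)
  moreover have "ball x0 (min d \<epsilon>) \<inter> S = {}" using \<epsilon> by (auto simp: disjoint_iff)
  ultimately show ?thesis using \<open>d > 0\<close> \<open>\<epsilon> > 0\<close> by (intro that[of "min d \<epsilon>"]) auto
qed

text \<open>Differentiation under the integral sign away from the singularity of the kernel: the
  linearization error of K at x0 - t is controlled uniformly in t \<in> S by the uniform continuity
  of G near the compact set x0 - S.\<close>
lemma has_derivative_integral_kernel:
  fixes K :: "'a::euclidean_space \<Rightarrow> real" and G :: "'a \<Rightarrow> 'a"
  assumes K: "\<And>z. z \<noteq> 0 \<Longrightarrow> (K has_derivative (\<lambda>h. G z \<bullet> h)) (at z)"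
    and G: "continuous_on (- {0}) G"
    and [measurable]: "K \<in> borel_measurable borel" "G \<in> borel_measurable borel"
      "w \<in> borel_measurable borel"
    and S: "compact S" "x0 \<notin> S"
    and w: "\<And>t. \<bar>w t\<bar> \<le> 1" "\<And>t. t \<notin> S \<Longrightarrow> w t = 0"
  shows "((\<lambda>x. \<integral>t. K (x - t) * w t \<partial>lborel) has_derivative
          (\<lambda>h. (\<integral>t. w t *\<^sub>R G (x0 - t) \<partial>lborel) \<bullet> h)) (at x0)"
proof -
  define G0 where "G0 = (\<integral>t. w t *\<^sub>R G (x0 - t) \<partial>lborel)"
  have "continuous_on (- {0}) K"
    using K has_derivative_continuous by (blast intro: continuous_at_imp_continuous_on)
  then have "continuous_on S (\<lambda>t. K (x - t))" if "x \<notin> S" for x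
    by (rule continuous_on_compose2) (use that in \<open>auto intro!: continuous_intros\<close>)
  then have intK: "integrable lborel (\<lambda>t. K (x - t) * w t)" if "x \<notin> S" for x
    using integrable_weighted_continuous[OF S(1) _ _ _ w, of "\<lambda>t. K (x - t)"] that
    by (simp add: mult.commute)
  have "continuous_on S (\<lambda>t. G (x0 - t))"
    by (rule continuous_on_compose2[OF G]) (use S(2) in \<open>auto intro!: continuous_intros\<close>)
  then have intG: "integrable lborel (\<lambda>t. w t *\<^sub>R G (x0 - t))"
    by (rule integrable_weighted_continuous[OF S(1)]) (use w in auto)
  define \<mu> where "\<mu> = measure lborel S"
  have "\<mu> \<ge> 0" by (simp add: \<mu>_def)
  have S_fin: "emeasure lborel S < \<infinity>"
    using emeasure_compact_finite[OF S(1)] by (simp add: less_top)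
  show ?thesis
    unfolding has_derivative_at_alt G0_def[symmetric]
  proof (intro conjI allI impI)
    show "bounded_linear ((\<bullet>) G0)" by (rule bounded_linear_inner_right)
    fix e :: real assume "e > 0"
    define e1 where "e1 = e / (\<mu> + 1)"
    have "e1 > 0" "\<mu> * e1 \<le> e"
      using \<open>e > 0\<close> \<open>\<mu> \<ge> 0\<close> by (auto simp: e1_def field_simps)
    obtain d where "d > 0" and ball_S: "ball x0 d \<inter> S = {}"
      and d: "\<And>x t. x \<in> ball x0 d \<Longrightarrow> t \<in> S \<Longrightarrow> norm (G (x - t) - G (x0 - t)) \<le> e1"
      using translates_uniformly_close[OF G S \<open>e1 > 0\<close>] by blast
    show "\<exists>d>0. \<forall>y. norm (y - x0) < d \<longrightarrow>
        norm ((\<integral>t. K (y - t) * w t \<partial>lborel) - (\<integral>t. K (x0 - t) * w t \<partial>lborel) - G0 \<bullet> (y - x0))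
          \<le> e * norm (y - x0)"
    proof (intro exI[of _ d] conjI allI impI \<open>d > 0\<close>)
      fix y assume "norm (y - x0) < d"
      then have y: "y \<in> ball x0 d" by (simp add: dist_norm norm_minus_commute)
      define err where "err t = K (y - t) - K (x0 - t) - G (x0 - t) \<bullet> (y - x0)" for t
      have err: "\<bar>err t\<bar> \<le> e1 * norm (y - x0)" if "t \<in> S" for t
        unfolding err_def
      proof (rule inner_linearization_bound[where f = "\<lambda>x. K (x - t)" and f' = "\<lambda>x. G (x - t)", OF _ d[OF _ that] y])
        fix x assume "x \<in> ball x0 d"
        then have "x - t \<noteq> 0" using ball_S that by auto
        from has_derivative_compose[OF has_derivative_diff[OF has_derivative_ident has_derivative_const] K[OF this]]
        show "((\<lambda>x. K (x - t)) has_derivative (\<lambda>h. G (x - t) \<bullet> h)) (at x)" by (simp add: o_def)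
      qed
      have "y \<notin> S" using y ball_S by auto
      have "G0 \<bullet> (y - x0) = (\<integral>t. w t * (G (x0 - t) \<bullet> (y - x0)) \<partial>lborel)"
        unfolding G0_def using integral_inner_left[OF intG, of "y - x0"] by simp
      moreover have "integrable lborel (\<lambda>t. w t * (G (x0 - t) \<bullet> (y - x0)))"
        using integrable_inner_left[OF intG, of "y - x0"] by simp
      moreover have "(\<integral>t. w t * err t \<partial>lborel) = (\<integral>t. K (y - t) * w t - K (x0 - t) * w t
          - w t * (G (x0 - t) \<bullet> (y - x0)) \<partial>lborel)"
        by (rule Bochner_Integration.integral_cong) (simp_all add: err_def right_diff_distrib mult.commute)
      ultimately have "(\<integral>t. K (y - t) * w t \<partial>lborel) - (\<integral>t. K (x0 - t) * w t \<partial>lborel) - G0 \<bullet> (y - x0)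
          = (\<integral>t. w t * err t \<partial>lborel)"
        using intK[OF \<open>y \<notin> S\<close>] intK[OF S(2)] by simp
      also have "\<bar>\<dots>\<bar> \<le> \<mu> * (e1 * norm (y - x0))"
        unfolding \<mu>_def using \<open>e1 > 0\<close>
        by (intro abs_integral_weighted_le[OF _ S_fin _ w] err) (auto intro: borel_compact S(1))
      also have "\<dots> \<le> e * norm (y - x0)"
        using mult_right_mono[OF \<open>\<mu> * e1 \<le> e\<close> norm_ge_zero[of "y - x0"]] by (simp add: ac_simps)
      finally show "norm ((\<integral>t. K (y - t) * w t \<partial>lborel) - (\<integral>t. K (x0 - t) * w t \<partial>lborel)
          - G0 \<bullet> (y - x0)) \<le> e * norm (y - x0)" by simp
    qed
  qed
qed

lemma v_pot_eq_integral_yukawa_kernel: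
  "v_pot \<tau> h x = (1 / (4 * pi)) * (\<integral>t. yukawa_kernel \<tau> (x - t) * h t \<partial>lborel)"
  unfolding v_pot_def yukawa_kernel_def by simp

lemma grad_v_pot:
  fixes w :: "real^3 \<Rightarrow> real"
  assumes S: "compact S" "x \<notin> S" and w: "w \<in> borel_measurable borel"
    "\<And>t. \<bar>w t\<bar> \<le> 1" "\<And>t. t \<notin> S \<Longrightarrow> w t = 0"
  shows "grad (v_pot \<tau> w) x = (1 / (4 * pi)) *\<^sub>R (\<integral>t. w t *\<^sub>R yukawa_kernel_grad \<tau> (x - t) \<partial>lborel)"
proof -
  define G where "G = (\<integral>t. w t *\<^sub>R yukawa_kernel_grad \<tau> (x - t) \<partial>lborel)"
  have "((\<lambda>x. \<integral>t. yukawa_kernel \<tau> (x - t) * w t \<partial>lborel) has_derivative (\<lambda>h. G \<bullet> h)) (at x)"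
    unfolding G_def using has_derivative_yukawa_kernel continuous_on_yukawa_kernel_grad
    by (rule has_derivative_integral_kernel[OF _ _ _ _ w(1) S w(2,3)]) simp_all
  then have v: "(v_pot \<tau> w has_derivative (\<lambda>h. (1 / (4 * pi)) * (G \<bullet> h))) (at x)"
    unfolding v_pot_eq_integral_yukawa_kernel[abs_def] by (rule has_derivative_mult_right)
  show ?thesis
    unfolding grad_def partial_deriv_def frechet_derivative_at[OF v, symmetric] G_def[symmetric]
    by (simp add: vec_eq_iff inner_axis)
qed

lemma integrable_indicator_ball_mult:
  fixes g :: "'a::euclidean_space \<Rightarrow> real"
  assumes "continuous_on (cball c r) g" "g \<in> borel_measurable borel"
  shows "integrable lborel (\<lambda>t. indicator (ball c r) t * g t)"
proof -
  have "integrable lborel (\<lambda>t. indicator (ball c r) t *\<^sub>R g t)"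
    by (rule integrable_weighted_continuous[OF compact_cball assms]) (auto simp: indicator_def)
  then show ?thesis by simp
qed

definition ball_exp_integral :: "real \<Rightarrow> 'a::euclidean_space \<Rightarrow> real \<Rightarrow> 'a \<Rightarrow> real" where
  "ball_exp_integral \<tau> c r x = (\<integral>t. indicator (ball c r) t * exp (- \<tau> * norm (x - t)) \<partial>lborel)"

lemma integrable_indicator_ball_exp:
  fixes c x :: "'a::euclidean_space"
  shows "integrable lborel (\<lambda>t. indicator (ball c r) t * exp (- \<tau> * norm (x - t)))"
  by (intro integrable_indicator_ball_mult continuous_intros) measurable

lemma abs_v_pot_ball_le:
  fixes x c :: "real^3"
  assumes "\<delta> > 0" and \<delta>: "\<And>t. t \<in> cball c r \<Longrightarrow> \<delta> \<le> norm (x - t)"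
  shows "\<bar>v_pot \<tau> (indicator (ball c r)) x\<bar> \<le> ball_exp_integral \<tau> c r x / (4 * pi * \<delta>)"
proof -
  have "x \<notin> cball c r" using \<delta>[of x] \<open>\<delta> > 0\<close> by force
  have "\<bar>\<integral>t. yukawa_kernel \<tau> (x - t) * indicator (ball c r) t \<partial>lborel\<bar>
      \<le> (\<integral>t. indicator (ball c r) t * exp (- \<tau> * norm (x - t)) / \<delta> \<partial>lborel)"
  proof (rule integral_abs_bound_integral)
    have "continuous_on (cball c r) (\<lambda>t. yukawa_kernel \<tau> (x - t))"
      by (rule continuous_on_compose2[OF continuous_on_yukawa_kernel])
        (use \<open>x \<notin> cball c r\<close> in \<open>auto intro!: continuous_intros\<close>)
    then show "integrable lborel (\<lambda>t. yukawa_kernel \<tau> (x - t) * indicator (ball c r) t)"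
      using integrable_indicator_ball_mult[of c r "\<lambda>t. yukawa_kernel \<tau> (x - t)"]
      by (simp add: mult.commute)
    show "integrable lborel (\<lambda>t. indicator (ball c r) t * exp (- \<tau> * norm (x - t)) / \<delta>)"
      using integrable_indicator_ball_exp by (rule integrable_divide_zero)
    show "\<bar>yukawa_kernel \<tau> (x - t) * indicator (ball c r) t\<bar>
        \<le> indicator (ball c r) t * exp (- \<tau> * norm (x - t)) / \<delta>" for t
      using \<delta>[of t] \<open>\<delta> > 0\<close> by (auto simp: yukawa_kernel_def indicator_def intro!: frac_le)
  qed
  then show ?thesis
    unfolding v_pot_eq_integral_yukawa_kernel ball_exp_integral_def
    by (simp add: abs_mult field_simps)
qed

lemma norm_grad_v_pot_ball_le:
  fixes x c :: "real^3"
  assumes "\<delta> > 0" "\<tau> \<ge> 0" and \<delta>: "\<And>t. t \<in> cball c r \<Longrightarrow> \<delta> \<le> norm (x - t)"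
  shows "norm (grad (v_pot \<tau> (indicator (ball c r))) x)
    \<le> (\<tau> / \<delta> + 1 / \<delta>\<^sup>2) * ball_exp_integral \<tau> c r x / (4 * pi)"
proof -
  have "x \<notin> cball c r" using \<delta>[of x] \<open>\<delta> > 0\<close> by force
  have "norm (\<integral>t. indicator (ball c r) t *\<^sub>R yukawa_kernel_grad \<tau> (x - t) \<partial>lborel)
      \<le> (\<integral>t. (\<tau> / \<delta> + 1 / \<delta>\<^sup>2) * (indicator (ball c r) t * exp (- \<tau> * norm (x - t))) \<partial>lborel)"
  proof (rule Bochner_Integration.integral_norm_bound_integral)
    show "integrable lborel (\<lambda>t. indicator (ball c r) t *\<^sub>R yukawa_kernel_grad \<tau> (x - t))"
      by (rule integrable_weighted_continuous[OF compact_cball continuous_on_compose2[OF continuous_on_yukawa_kernel_grad]])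
        (use \<open>x \<notin> cball c r\<close> in \<open>auto intro!: continuous_intros simp: indicator_def\<close>)
    show "integrable lborel (\<lambda>t. (\<tau> / \<delta> + 1 / \<delta>\<^sup>2) * (indicator (ball c r) t * exp (- \<tau> * norm (x - t))))"
      using integrable_indicator_ball_exp by (rule integrable_mult_right)
    show "norm (indicator (ball c r) t *\<^sub>R yukawa_kernel_grad \<tau> (x - t))
        \<le> (\<tau> / \<delta> + 1 / \<delta>\<^sup>2) * (indicator (ball c r) t * exp (- \<tau> * norm (x - t)))" for t
    proof (cases "t \<in> ball c r")
      case True
      define n where "n = norm (x - t)"
      have "\<delta> \<le> n" using \<delta> True by (auto simp: n_def)
      have "(\<tau> * n + 1) / n\<^sup>2 = \<tau> / n + 1 / n\<^sup>2"
        using \<open>\<delta> \<le> n\<close> \<open>\<delta> > 0\<close> by (simp add: field_simps power2_eq_square)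
      also have "\<dots> \<le> \<tau> / \<delta> + 1 / \<delta>\<^sup>2"
        using \<open>\<delta> \<le> n\<close> \<open>\<delta> > 0\<close> \<open>\<tau> \<ge> 0\<close>
        by (intro add_mono divide_left_mono power_mono mult_pos_pos) auto
      finally have "exp (- \<tau> * n) * ((\<tau> * n + 1) / n\<^sup>2) \<le> exp (- \<tau> * n) * (\<tau> / \<delta> + 1 / \<delta>\<^sup>2)"
        by (rule mult_left_mono) simp
      then show ?thesis
        using True norm_yukawa_kernel_grad[OF \<open>\<tau> \<ge> 0\<close>, of "x - t"] by (simp add: n_def mult_ac)
    qed simp
  qed
  also have "\<dots> = (\<tau> / \<delta> + 1 / \<delta>\<^sup>2) * ball_exp_integral \<tau> c r x"
    unfolding ball_exp_integral_def by (rule integral_mult_right_zero)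
  finally have "norm (\<integral>t. indicator (ball c r) t *\<^sub>R yukawa_kernel_grad \<tau> (x - t) \<partial>lborel)
      \<le> (\<tau> / \<delta> + 1 / \<delta>\<^sup>2) * ball_exp_integral \<tau> c r x" .
  moreover have "grad (v_pot \<tau> (indicator (ball c r))) x = (1 / (4 * pi)) *\<^sub>R
      (\<integral>t. indicator (ball c r) t *\<^sub>R yukawa_kernel_grad \<tau> (x - t) \<partial>lborel)"
    by (rule grad_v_pot[OF compact_cball \<open>x \<notin> cball c r\<close>]) (measurable, auto simp: indicator_def)
  ultimately show ?thesis by (simp add: divide_right_mono)
qed

lemma ball_exp_integral_le:
  fixes c x :: "'a::euclidean_space"
  assumes "\<tau> \<ge> 0"
  shows "ball_exp_integral \<tau> c r x \<le> exp (- \<tau> * (norm (x - c) - r)) *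
    (\<integral>t. indicator (ball c r) t * exp (- \<tau> * (r - norm (t - c))) \<partial>lborel)"
proof -
  have "ball_exp_integral \<tau> c r x \<le>
      (\<integral>t. exp (- \<tau> * (norm (x - c) - r)) * (indicator (ball c r) t * exp (- \<tau> * (r - norm (t - c)))) \<partial>lborel)"
    unfolding ball_exp_integral_def
  proof (rule integral_mono[OF integrable_indicator_ball_exp])
    show "integrable lborel (\<lambda>t. exp (- \<tau> * (norm (x - c) - r)) *
        (indicator (ball c r) t * exp (- \<tau> * (r - norm (t - c)))))"
      by (intro integrable_mult_right integrable_indicator_ball_mult continuous_intros) measurable
    fix t
    have "\<tau> * norm (x - c) \<le> \<tau> * (norm (x - t) + norm (t - c))"
      using norm_triangle_ineq[of "x - t" "t - c"] \<open>\<tau> \<ge> 0\<close> by (simp add: mult_left_mono)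
    then have "exp (- \<tau> * norm (x - t)) \<le> exp (- \<tau> * (norm (x - c) - r)) * exp (- \<tau> * (r - norm (t - c)))"
      by (simp add: exp_add[symmetric] algebra_simps)
    then show "indicator (ball c r) t * exp (- \<tau> * norm (x - t)) \<le>
        exp (- \<tau> * (norm (x - c) - r)) * (indicator (ball c r) t * exp (- \<tau> * (r - norm (t - c))))"
      by (simp add: indicator_def)
  qed
  then show ?thesis by simp
qed

lemma measure_ball_3: "r \<ge> 0 \<Longrightarrow> measure lborel (ball (c::real^3) r) = r ^ 3 * measure lborel (ball (0::real^3) 1)"
  using content_ball_conv_unit_ball[of r c] by simp

lemma cube_diff_le:
  fixes s r :: real
  assumes "0 \<le> s" "s \<le> r"
  shows "r ^ 3 - (r - s) ^ 3 \<le> 3 * r\<^sup>2 * s"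
proof -
  have "r * (r - s) \<le> r * r" "(r - s)\<^sup>2 \<le> r\<^sup>2"
    using assms by (auto intro!: mult_left_mono power_mono)
  then have "s * (r\<^sup>2 + r * (r - s) + (r - s)\<^sup>2) \<le> s * (3 * r\<^sup>2)"
    using assms by (intro mult_left_mono) (auto simp: power2_eq_square)
  moreover have "r ^ 3 - (r - s) ^ 3 = s * (r\<^sup>2 + r * (r - s) + (r - s)\<^sup>2)"
    by (simp add: algebra_simps power2_eq_square power3_eq_cube)
  ultimately show ?thesis by (simp add: mult_ac)
qed
lemma measure_ball_diff_ball_le:
  fixes c :: "real^3"
  assumes "0 \<le> s" "s \<le> r"
  shows "measure lborel (ball c r - ball c (r - s)) \<le> 3 * r\<^sup>2 * s * measure lborel (ball (0::real^3) 1)"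
proof -
  have "measure lborel (ball c r - ball c (r - s))
      = measure lborel (ball c r) - measure lborel (ball c (r - s))"
    using emeasure_lborel_ball_finite[of c r] assms by (intro measure_Diff subset_ball) auto
  also have "\<dots> = (r ^ 3 - (r - s) ^ 3) * measure lborel (ball (0::real^3) 1)"
    using measure_ball_3[of r c] measure_ball_3[of "r - s" c] assms by (simp add: left_diff_distrib)
  also have "\<dots> \<le> 3 * r\<^sup>2 * s * measure lborel (ball (0::real^3) 1)"
    using cube_diff_le[OF assms] by (rule mult_right_mono) simp
  finally show ?thesis .
qed
definition ball_depth_const :: "real \<Rightarrow> real" where
  "ball_depth_const r = (r ^ 3 + 3 * r\<^sup>2) * measure lborel (ball (0::real^3) 1)"

lemma ball_depth_const_nonneg: "r \<ge> 0 \<Longrightarrow> ball_depth_const r \<ge> 0"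
  by (simp add: ball_depth_const_def)

lemma indicator_ball_exp_depth_le:
  fixes c t :: "'a::real_normed_vector"
  assumes "\<tau> \<ge> 0" "s \<ge> 0"
  shows "indicator (ball c r) t * exp (- \<tau> * (r - norm (t - c)))
    \<le> exp (- \<tau> * s) * indicator (ball c r) t + indicator (ball c r - ball c (r - s)) t"
proof (cases "t \<in> ball c (r - s)")
  case True
  then have "\<tau> * s \<le> \<tau> * (r - norm (t - c))"
    using assms by (intro mult_left_mono) (auto simp: dist_norm norm_minus_commute)
  moreover have "t \<in> ball c r" using True \<open>s \<ge> 0\<close> by auto
  ultimately show ?thesis using True by (simp add: indicator_def)
next
  case False
  show ?thesis
  proof (cases "t \<in> ball c r")
    case True
    then have "exp (- \<tau> * (r - norm (t - c))) \<le> 1"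
      using assms by (simp add: dist_norm norm_minus_commute)
    moreover have "indicator (ball c r) t = (1::real)" "indicator (ball c r - ball c (r - s)) t = (1::real)"
      using True False by simp_all
    ultimately show ?thesis using exp_gt_zero[of "- \<tau> * s"] by (simp only: mult_1_left mult_1_right)
  qed simp
qed

lemma integral_ball_exp_depth_le:
  fixes c :: "real^3"
  assumes "r > 0" "1 / r\<^sup>2 < \<tau>"
  shows "(\<integral>t. indicator (ball c r) t * exp (- \<tau> * (r - norm (t - c))) \<partial>lborel)
    \<le> ball_depth_const r / sqrt \<tau>"
proof -
  define U where "U = measure lborel (ball (0::real^3) 1)"
  define q where "q = sqrt \<tau>"
  have "\<tau> > 0" using assms(2) \<open>r > 0\<close> by (smt (verit) zero_less_divide_1_iff zero_less_power)
  then have "q > 0" "\<tau> * (1 / q) = q" by (simp_all add: q_def real_div_sqrt)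
  have "1 / r < q"
    using real_sqrt_less_mono[OF assms(2)] \<open>r > 0\<close> by (simp add: q_def real_sqrt_divide)
  then have "1 / q < r" using \<open>q > 0\<close> \<open>r > 0\<close> by (simp add: field_simps)
  define shell where "shell = ball c r - ball c (r - 1 / q)"
  have fin: "emeasure lborel shell < \<infinity>"
    unfolding shell_def by (rule le_less_trans[OF emeasure_mono emeasure_lborel_ball_finite]) auto
  have "(\<integral>t. indicator (ball c r) t * exp (- \<tau> * (r - norm (t - c))) \<partial>lborel)
      \<le> (\<integral>t. exp (- q) * indicator (ball c r) t + indicator shell t \<partial>lborel)"
  proof (rule integral_mono)
    show "integrable lborel (\<lambda>t. indicator (ball c r) t * exp (- \<tau> * (r - norm (t - c))))"
      by (intro integrable_indicator_ball_mult continuous_intros) measurable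
    show "integrable lborel (\<lambda>t. exp (- q) * indicator (ball c r) t + indicator shell t)"
      using fin emeasure_lborel_ball_finite[of c r]
      by (intro Bochner_Integration.integrable_add integrable_mult_right integrable_real_indicator)
        (auto simp: shell_def)
    show "indicator (ball c r) t * exp (- \<tau> * (r - norm (t - c)))
        \<le> exp (- q) * indicator (ball c r) t + indicator shell t" for t
      using indicator_ball_exp_depth_le[of \<tau> "1 / q" c r t] \<open>\<tau> > 0\<close> \<open>q > 0\<close> \<open>\<tau> * (1 / q) = q\<close>
      by (simp add: shell_def)
  qed
  also have "\<dots> = exp (- q) * measure lborel (ball c r) + measure lborel shell"
    using fin emeasure_lborel_ball_finite[of c r]
    by (subst Bochner_Integration.integral_add) (auto intro!: integrable_real_indicator simp: shell_def)
  also have "\<dots> \<le> (1 / q) * (r ^ 3 * U) + 3 * r\<^sup>2 * (1 / q) * U"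
  proof -
    have "q \<le> exp q" using exp_ge_add_one_self[of q] by linarith
    then have exp_le: "exp (- q) \<le> 1 / q" using \<open>q > 0\<close> by (simp add: exp_minus field_simps)
    have "0 \<le> r ^ 3 * U" using \<open>r > 0\<close> by (simp add: U_def)
    moreover have "measure lborel (ball c r) = r ^ 3 * U"
      using measure_ball_3[of r c] \<open>r > 0\<close> by (simp add: U_def)
    moreover have "measure lborel shell \<le> 3 * r\<^sup>2 * (1 / q) * U"
      unfolding shell_def U_def using \<open>q > 0\<close> \<open>1 / q < r\<close> by (intro measure_ball_diff_ball_le) auto
    ultimately show ?thesis using mult_right_mono[OF exp_le] by (intro add_mono) auto
  qed
  also have "\<dots> = (r ^ 3 + 3 * r\<^sup>2) * U / q" by (simp add: field_simps add_divide_distrib)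
  finally show ?thesis by (simp add: ball_depth_const_def U_def q_def)
qed

lemma ball_exp_integral_le_exp_dist:
  fixes c x :: "real^3"
  assumes "r > 0" "1 / r\<^sup>2 < \<tau>"
  shows "ball_exp_integral \<tau> c r x \<le> exp (- \<tau> * (norm (x - c) - r)) * (ball_depth_const r / sqrt \<tau>)"
proof -
  have "\<tau> > 0" using assms by (smt (verit) zero_less_divide_1_iff zero_less_power)
  then show ?thesis
    using ball_exp_integral_le[of \<tau> c r x] integral_ball_exp_depth_le[OF assms, of c]
    by (smt (verit) exp_gt_zero mult_left_mono)
qed

lemma abs_J_integrand_le_ball_exp:
  fixes x c c' :: "real^3"
  assumes "\<delta> > 0" "\<tau> \<ge> 1"
    and \<delta>: "\<And>t. t \<in> cball c r \<Longrightarrow> \<delta> \<le> norm (x - t)"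
    and \<delta>': "\<And>t. t \<in> cball c' r' \<Longrightarrow> \<delta> \<le> norm (x - t)"
  shows "\<bar>grad (v_pot \<tau> (indicator (ball c r))) x \<bullet> grad (v_pot \<tau> (indicator (ball c' r'))) x
      + \<tau>\<^sup>2 * v_pot \<tau> (indicator (ball c r)) x * v_pot \<tau> (indicator (ball c' r')) x\<bar>
    \<le> 2 * ((1 / \<delta> + 1 / \<delta>\<^sup>2) / (4 * pi))\<^sup>2 * \<tau>\<^sup>2 * ball_exp_integral \<tau> c r x * ball_exp_integral \<tau> c' r' x"
proof -
  define k where "k = (1 / \<delta> + 1 / \<delta>\<^sup>2) / (4 * pi)"
  define vf vg gf gg where "vf = v_pot \<tau> (indicator (ball c r)) x"
    and "vg = v_pot \<tau> (indicator (ball c' r')) x"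
    and "gf = grad (v_pot \<tau> (indicator (ball c r))) x"
    and "gg = grad (v_pot \<tau> (indicator (ball c' r'))) x"
  define Ef Eg where "Ef = ball_exp_integral \<tau> c r x" and "Eg = ball_exp_integral \<tau> c' r' x"
  have "Ef \<ge> 0" "Eg \<ge> 0" by (simp_all add: Ef_def Eg_def ball_exp_integral_def)
  have scale: "X / (4 * pi * \<delta>) \<le> k * X" "(\<tau> / \<delta> + 1 / \<delta>\<^sup>2) * X / (4 * pi) \<le> \<tau> * (k * X)"
    if "X \<ge> 0" for X
  proof -
    have "1 / \<delta> \<le> 1 / \<delta> + 1 / \<delta>\<^sup>2" "\<tau> / \<delta> + 1 / \<delta>\<^sup>2 \<le> \<tau> * (1 / \<delta> + 1 / \<delta>\<^sup>2)"
      using \<open>\<delta> > 0\<close> \<open>\<tau> \<ge> 1\<close> by (auto simp: field_simps)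
    from this[THEN mult_right_mono, OF that, THEN divide_right_mono, of "4 * pi"]
    show "X / (4 * pi * \<delta>) \<le> k * X" "(\<tau> / \<delta> + 1 / \<delta>\<^sup>2) * X / (4 * pi) \<le> \<tau> * (k * X)"
      by (simp_all add: k_def ac_simps)
  qed
  have "k \<ge> 0" using \<open>\<delta> > 0\<close> by (simp add: k_def)
  have v: "\<bar>vf\<bar> \<le> k * Ef" "\<bar>vg\<bar> \<le> k * Eg"
    using abs_v_pot_ball_le[OF \<open>\<delta> > 0\<close>, of c r x \<tau>] abs_v_pot_ball_le[OF \<open>\<delta> > 0\<close>, of c' r' x \<tau>]
      \<delta> \<delta>' scale(1) \<open>Ef \<ge> 0\<close> \<open>Eg \<ge> 0\<close>
    unfolding vf_def vg_def Ef_def Eg_def by (meson order_trans)+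
  have g: "norm gf \<le> \<tau> * (k * Ef)" "norm gg \<le> \<tau> * (k * Eg)"
    using norm_grad_v_pot_ball_le[OF \<open>\<delta> > 0\<close>, of \<tau> c r x] norm_grad_v_pot_ball_le[OF \<open>\<delta> > 0\<close>, of \<tau> c' r' x]
      \<delta> \<delta>' scale(2) \<open>Ef \<ge> 0\<close> \<open>Eg \<ge> 0\<close> \<open>\<tau> \<ge> 1\<close>
    unfolding gf_def gg_def Ef_def Eg_def by (meson order_trans zero_le_one)+
  have "\<bar>gf \<bullet> gg + \<tau>\<^sup>2 * vf * vg\<bar> \<le> norm gf * norm gg + \<tau>\<^sup>2 * (\<bar>vf\<bar> * \<bar>vg\<bar>)"
    using abs_triangle_ineq[of "gf \<bullet> gg" "\<tau>\<^sup>2 * vf * vg"] Cauchy_Schwarz_ineq2[of gf gg]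
    by (simp add: abs_mult mult.assoc)
  also have "\<dots> \<le> \<tau> * (k * Ef) * (\<tau> * (k * Eg)) + \<tau>\<^sup>2 * ((k * Ef) * (k * Eg))"
    using v g \<open>\<tau> \<ge> 1\<close> \<open>k \<ge> 0\<close> \<open>Ef \<ge> 0\<close>
    by (intro add_mono mult_mono mult_left_mono) auto
  also have "\<dots> = 2 * k\<^sup>2 * \<tau>\<^sup>2 * Ef * Eg"
    by (simp add: power2_eq_square)
  finally show ?thesis
    unfolding vf_def vg_def gf_def gg_def Ef_def Eg_def k_def .
qed

lemma abs_J_integrand_le_exp:
  fixes x c c' :: "real^3"
  assumes "\<delta> > 0" "\<tau> \<ge> 1" "r > 0" "r' > 0" "1 / r\<^sup>2 < \<tau>" "1 / r'\<^sup>2 < \<tau>"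
    and \<delta>: "\<And>t. t \<in> cball c r \<Longrightarrow> \<delta> \<le> norm (x - t)"
    and \<delta>': "\<And>t. t \<in> cball c' r' \<Longrightarrow> \<delta> \<le> norm (x - t)"
    and m: "m \<le> (norm (x - c) - r) + (norm (x - c') - r')"
  shows "\<bar>grad (v_pot \<tau> (indicator (ball c r))) x \<bullet> grad (v_pot \<tau> (indicator (ball c' r'))) x
      + \<tau>\<^sup>2 * v_pot \<tau> (indicator (ball c r)) x * v_pot \<tau> (indicator (ball c' r')) x\<bar>
    \<le> 2 * ((1 / \<delta> + 1 / \<delta>\<^sup>2) / (4 * pi))\<^sup>2 * ball_depth_const r * ball_depth_const r'
      * (\<tau> * exp (- \<tau> * m))"
proof -
  define Cf Cg where "Cf = ball_depth_const r" and "Cg = ball_depth_const r'"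
  have "Cf \<ge> 0" "Cg \<ge> 0"
    using \<open>r > 0\<close> \<open>r' > 0\<close> by (simp_all add: Cf_def Cg_def ball_depth_const_nonneg)
  have "ball_exp_integral \<tau> c r x * ball_exp_integral \<tau> c' r' x
      \<le> (exp (- \<tau> * (norm (x - c) - r)) * (Cf / sqrt \<tau>)) * (exp (- \<tau> * (norm (x - c') - r')) * (Cg / sqrt \<tau>))"
    unfolding Cf_def Cg_def using assms(2-6)
    by (intro mult_mono ball_exp_integral_le_exp_dist)
      (auto simp: ball_exp_integral_def intro!: divide_nonneg_nonneg mult_nonneg_nonneg ball_depth_const_nonneg)
  also have "\<dots> = exp (- \<tau> * ((norm (x - c) - r) + (norm (x - c') - r'))) * (Cf * Cg / \<tau>)"
    using \<open>\<tau> \<ge> 1\<close> by (simp add: exp_add[symmetric] algebra_simps)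
  also have "\<dots> \<le> exp (- \<tau> * m) * (Cf * Cg / \<tau>)"
    using m \<open>\<tau> \<ge> 1\<close> \<open>Cf \<ge> 0\<close> \<open>Cg \<ge> 0\<close> by (intro mult_right_mono) auto
  finally have "\<tau>\<^sup>2 * (ball_exp_integral \<tau> c r x * ball_exp_integral \<tau> c' r' x)
      \<le> Cf * Cg * (\<tau> * exp (- \<tau> * m))"
    using \<open>\<tau> \<ge> 1\<close> mult_left_mono[of _ _ "\<tau>\<^sup>2"] by (simp add: power2_eq_square field_simps)
  then have "2 * ((1 / \<delta> + 1 / \<delta>\<^sup>2) / (4 * pi))\<^sup>2 * \<tau>\<^sup>2 * ball_exp_integral \<tau> c r x * ball_exp_integral \<tau> c' r' x
      \<le> 2 * ((1 / \<delta> + 1 / \<delta>\<^sup>2) / (4 * pi))\<^sup>2 * (Cf * Cg * (\<tau> * exp (- \<tau> * m)))"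
    by (simp add: mult_left_mono mult.assoc)
  moreover have "\<bar>grad (v_pot \<tau> (indicator (ball c r))) x \<bullet> grad (v_pot \<tau> (indicator (ball c' r'))) x
      + \<tau>\<^sup>2 * v_pot \<tau> (indicator (ball c r)) x * v_pot \<tau> (indicator (ball c' r')) x\<bar>
    \<le> 2 * ((1 / \<delta> + 1 / \<delta>\<^sup>2) / (4 * pi))\<^sup>2 * \<tau>\<^sup>2 * ball_exp_integral \<tau> c r x * ball_exp_integral \<tau> c' r' x"
    by (rule abs_J_integrand_le_ball_exp[OF \<open>\<delta> > 0\<close> \<open>\<tau> \<ge> 1\<close>]) (use \<delta> \<delta>' in auto)
  ultimately show ?thesis unfolding Cf_def Cg_def by (simp add: mult_ac)
qed

lemma exists_sphere_point_dist:
  fixes x c :: "'a::real_normed_vector"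
  assumes "0 < r" "r \<le> norm (x - c)"
  obtains y where "y \<in> sphere c r" "norm (x - y) = norm (x - c) - r"
proof
  define n where "n = norm (x - c)"
  have "n > 0" using assms unfolding n_def by linarith
  define y where "y = c + (r / n) *\<^sub>R (x - c)"
  show "y \<in> sphere c r" using \<open>n > 0\<close> \<open>r > 0\<close> by (simp add: y_def dist_norm n_def)
  have "x - y = (1 - r / n) *\<^sub>R (x - c)" by (simp add: y_def algebra_simps)
  moreover have "1 - r / n \<ge> 0" using \<open>n > 0\<close> assms by (simp add: n_def)
  ultimately have "norm (x - y) = (1 - r / n) * n" by (simp add: n_def)
  then show "norm (x - y) = norm (x - c) - r" using \<open>n > 0\<close> by (simp add: n_def field_simps)
qed

lemma Inf_phi_le_dist_sum:
  fixes D :: "(real^3) set" and c c' x :: "real^3"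
  assumes "r > 0" "r' > 0" "x \<in> D" "cball c r \<inter> D = {}" "cball c' r' \<inter> D = {}"
  shows "Inf {phi x y y' | x y y'. x \<in> frontier D \<and> y \<in> sphere c r \<and> y' \<in> sphere c' r'}
     \<le> (norm (x - c) - r) + (norm (x - c') - r')"
proof -
  have far: "\<rho> \<le> norm (x - a)" if "cball a \<rho> \<inter> D = {}" for a \<rho>
  proof (rule ccontr)
    assume "\<not> ?thesis"
    then have "x \<in> cball a \<rho>" by (simp add: dist_norm norm_minus_commute)
    then show False using that \<open>x \<in> D\<close> by blast
  qed
  have "r \<le> norm (x - c)" "r' \<le> norm (x - c')" using far assms(4,5) by blast+
  then obtain y y' where y: "y \<in> sphere c r" "norm (x - y) = norm (x - c) - r"
    and y': "y' \<in> sphere c' r'" "norm (x - y') = norm (x - c') - r'"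
    using exists_sphere_point_dist assms(1,2) by metis
  have "y \<notin> D" using y(1) assms(4) by auto
  then have "closed_segment x y \<inter> frontier D \<noteq> {}"
    using assms(3) by (intro connected_Int_frontier) auto
  then obtain z where z: "z \<in> closed_segment x y" "z \<in> frontier D" by blast
  then have "norm (y - z) + norm (z - x) = norm (x - y)"
    using between_mem_segment[of x y z] between[of x y z]
    by (simp add: dist_norm norm_minus_commute)
  then have "phi z y y' \<le> norm (x - y) + norm (x - y')"
    unfolding phi_def using norm_triangle_ineq[of "z - x" "x - y'"] by simp
  moreover have "Inf {phi x y y' | x y y'. x \<in> frontier D \<and> y \<in> sphere c r \<and> y' \<in> sphere c' r'} \<le> phi z y y'"
    using z(2) y(1) y'(1)
    by (intro cInf_lower bdd_belowI[of _ 0]) (auto simp: phi_def)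
  ultimately show ?thesis using y(2) y'(2) by linarith
qed

theorem lemma2p3:
  fixes D :: "(real^3) set" and c c' :: "real^3" and r r' :: real
  assumes "open D" "bounded D" "D \<noteq> {}" "C2_boundary D"
    and "r > 0" "r' > 0"
    and "cball c r \<inter> closure D = {}" "cball c' r' \<inter> closure D = {}"
  shows "(\<lambda>\<tau>. J_fun D \<tau> (indicator (ball c r)) (indicator (ball c' r')))
           \<in> O[at_top](\<lambda>\<tau>. \<tau> * exp (- \<tau> *
               Inf {phi x y y' | x y y'. x \<in> frontier D \<and> y \<in> sphere c r \<and> y' \<in> sphere c' r'}))"
proof -
  define m where "m = Inf {phi x y y' | x y y'. x \<in> frontier D \<and> y \<in> sphere c r \<and> y' \<in> sphere c' r'}"
  have disj: "cball c r \<inter> D = {}" "cball c' r' \<inter> D = {}" using assms(7,8) closure_subset by blast+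
  obtain \<delta> where "\<delta> > 0" and \<delta>: "\<And>x t. x \<in> D \<Longrightarrow> t \<in> cball c r \<union> cball c' r' \<Longrightarrow> \<delta> \<le> norm (x - t)"
  proof -
    have "closure D \<inter> (cball c r \<union> cball c' r') = {}" using assms(7,8) by blast
    then obtain \<delta> where "\<delta> > 0" "\<forall>x\<in>closure D. \<forall>t\<in>cball c r \<union> cball c' r'. \<delta> \<le> dist x t"
      using separate_compact_closed[of "closure D"] assms(2) by (meson closed_Un closed_cball compact_closure)
    then show ?thesis
      by (intro that[of \<delta>]) (use closure_subset in \<open>force simp: dist_norm\<close>)+
  qed
  define C where "C = 2 * ((1 / \<delta> + 1 / \<delta>\<^sup>2) / (4 * pi))\<^sup>2 * ball_depth_const r * ball_depth_const r'"
  have "\<forall>\<^sub>F \<tau> in at_top. norm (J_fun D \<tau> (indicator (ball c r)) (indicator (ball c' r')))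
      \<le> measure lborel D * C * norm (\<tau> * exp (- \<tau> * m))"
    using eventually_ge_at_top[of "1 + 1 / r\<^sup>2 + 1 / r'\<^sup>2"]
  proof eventually_elim
    case (elim \<tau>)
    have "0 < 1 / r\<^sup>2" "0 < 1 / r'\<^sup>2" using assms(5,6) by simp_all
    then have \<tau>: "\<tau> \<ge> 1" "1 / r\<^sup>2 < \<tau>" "1 / r'\<^sup>2 < \<tau>" using elim by linarith+
    have "C \<ge> 0" using assms(5,6) by (simp add: C_def ball_depth_const_nonneg)
    have "\<bar>\<integral>x. indicator D x * (grad (v_pot \<tau> (indicator (ball c r))) x \<bullet> grad (v_pot \<tau> (indicator (ball c' r'))) x
        + \<tau>\<^sup>2 * v_pot \<tau> (indicator (ball c r)) x * v_pot \<tau> (indicator (ball c' r')) x) \<partial>lborel\<bar>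
        \<le> measure lborel D * (C * (\<tau> * exp (- \<tau> * m)))"
      using assms(1) emeasure_bounded_finite[OF assms(2)] \<open>C \<ge> 0\<close> \<tau>
      by (intro abs_integral_weighted_le abs_J_integrand_le_exp[OF \<open>\<delta> > 0\<close> _ assms(5,6), folded C_def]
          Inf_phi_le_dist_sum[OF assms(5,6) _ disj, folded m_def])
        (auto simp: \<delta>)
    then show ?case
      using \<tau> by (simp add: J_fun_def set_lebesgue_integral_def mult.assoc)
  qed
  then show ?thesis unfolding m_def[symmetric] by (rule bigoI)
qed

end
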